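(* Let $G$ be a graph without isolated vertices and $T$ a solution counting decision tree for $\varphi(G)$. Let $u$ be a node of $T$ labelled by a variable $x$ that is not forced to $1$ by $A_u$, and let $F^u=\varphi(G)|_{A_u}$. Then $|F^u|_{\neg x}|/|F^u|\geq (1/2)^{|N^u(x)|+1}$ and $|F^u|_{x}|/|F^u|\geq 1/2$.
   Context: $\varphi(G)$ is the CNF on variables $V(G)$ with clauses $(u\vee v)$ for $\{u,v\}\in E(G)$. Boolean functions are identified with their sets of satisfying assignments (sets of literals); $F|_S$ is the function on the remaining variables whose satisfying assignments are the $S'$ with $S\cup S'$ satisfying $F$; $|\cdot|$ counts satisfying assignments. Decision tree for $F$ (not constant false): root labelled by some $x\in Var(F)$; for each literal $\ell\in\{x,\neg x\}$ occurring in some satisfying assignment, an outgoing edge labelled $\ell$ whose head is a leaf if $|Var(F)|=1$ and otherwise the root of a decision tree for $F|_\ell$. A solution counting decision tree additionally gives the edge leaving node $w$ with label $\ell$ the weight $|F|_{A_w\cup\{\ell\}}|/|F|_{A_w}|$. $A_w$ is the set of literals labelling the root-$w$ path. A variable $y$ is forced to $1$ by $A_u$ if some neighbour $z$ of $y$ in $G$ has $\neg z\in A_u$. $N^u(y)$ is the set of neighbours $z$ of $y$ that do not occur in $A_u$ and are not forced to $1$ by $A_u$. *)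

theory Defs
  imports Complex_Main
begin

text \<open>Literals over variables 'a: (v, True) is the positive literal v, (v, False) is \<not>v.
A Boolean function is represented by its variable set together with its set of
satisfying assignments (each a set of literals assigning every variable exactly once).\<close>

type_synonym 'a lit = "'a \<times> bool"
type_synonym 'a bfun = "'a set \<times> 'a lit set set"

definition total_on :: "'a set \<Rightarrow> 'a lit set \<Rightarrow> bool" where
  "total_on V S \<longleftrightarrow> S \<subseteq> V \<times> UNIV \<and> (\<forall>v\<in>V. ((v, True) \<in> S) \<noteq> ((v, False) \<in> S))"

definition simple_graph :: "'a set \<Rightarrow> 'a set set \<Rightarrow> bool" where
  "simple_graph V E \<longleftrightarrow> finite V \<and> (\<forall>e\<in>E. e \<subseteq> V \<and> card e = 2)"

definition no_isolated :: "'a set \<Rightarrow> 'a set set \<Rightarrow> bool" where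
  "no_isolated V E \<longleftrightarrow> (\<forall>v\<in>V. \<exists>e\<in>E. v \<in> e)"

text \<open>phi(G): the CNF with a clause (u \<or> v) for each edge {u,v}.\<close>
definition phi :: "'a set \<Rightarrow> 'a set set \<Rightarrow> 'a bfun" where
  "phi V E = (V, {S. total_on V S \<and> (\<forall>u v. {u, v} \<in> E \<longrightarrow> (u, True) \<in> S \<or> (v, True) \<in> S)})"

definition restr :: "'a bfun \<Rightarrow> 'a lit set \<Rightarrow> 'a bfun" where
  "restr F A = (fst F - fst ` A, {S'. total_on (fst F - fst ` A) S' \<and> S' \<union> A \<in> snd F})"

definition nsat :: "'a bfun \<Rightarrow> nat" where
  "nsat F = card (snd F)"

text \<open>Decision trees: a node carries its variable, the subtree along the edge labelled x,
and the subtree along the edge labelled \<not>x (None if that edge is absent).\<close>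
datatype 'a dtree = Leaf | Node 'a "'a dtree option" "'a dtree option"

fun child :: "'a dtree \<Rightarrow> bool \<Rightarrow> 'a dtree option" where
  "child Leaf b = None"
| "child (Node x p n) b = (if b then p else n)"

inductive dtree_for :: "'a bfun \<Rightarrow> 'a dtree \<Rightarrow> bool" where
  "\<lbrakk> snd F \<noteq> {}; x \<in> fst F;
     \<forall>b. (child (Node x p n) b \<noteq> None) = (\<exists>S\<in>snd F. (x, b) \<in> S);
     \<forall>b c. child (Node x p n) b = Some c \<longrightarrow>
        (fst F = {x} \<longrightarrow> c = Leaf) \<and>
        (fst F \<noteq> {x} \<longrightarrow> dtree_for (restr F {(x, b)}) c) \<rbrakk>
   \<Longrightarrow> dtree_for F (Node x p n)"

text \<open>path T A u: u is a node of T and A is the set of literals labelling the root-u path.\<close>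
inductive path :: "'a dtree \<Rightarrow> 'a lit set \<Rightarrow> 'a dtree \<Rightarrow> bool" where
  "path T {} T"
| "\<lbrakk> T = Node x p n; child T b = Some c; path c A u \<rbrakk> \<Longrightarrow> path T (insert (x, b) A) u"

definition forced1 :: "'a set set \<Rightarrow> 'a lit set \<Rightarrow> 'a \<Rightarrow> bool" where
  "forced1 E A y \<longleftrightarrow> (\<exists>z. {y, z} \<in> E \<and> (z, False) \<in> A)"

definition Nu :: "'a set set \<Rightarrow> 'a lit set \<Rightarrow> 'a \<Rightarrow> 'a set" where
  "Nu E A y = {z. {y, z} \<in> E \<and> z \<notin> fst ` A \<and> \<not> forced1 E A z}"

end

theory Submission
  imports Defs
begin

text \<open>
  The formula \<open>\<phi>(G)\<close> is monotone, so the solutions of \<open>F\<^sup>u\<close> are closed under setting a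
  variable to 1; flipping \<open>x\<close> from 0 to 1 therefore injects the solutions with \<open>\<not>x\<close> into those
  with \<open>x\<close>, which gives the bound 1/2. For \<open>\<not>x\<close>, send every solution to the one obtained by
  setting \<open>x\<close> to 0 and all of \<open>N\<^sup>u(x)\<close> to 1. This is again a solution: a neighbour of \<open>x\<close>
  outside \<open>N\<^sup>u(x)\<close> is either assigned 1 by \<open>A\<^sub>u\<close> (as \<open>x\<close> is not forced) or forced to 1.
  The map changes only the \<open>|N\<^sup>u(x)| + 1\<close> variables \<open>x\<close> and \<open>N\<^sup>u(x)\<close>, so its fibres have
  at most \<open>2\<^bsup>|N\<^sup>u(x)|+1\<^esup>\<close> elements.
\<close>

lemma path_Leaf: "path Leaf A u \<Longrightarrow> A = {} \<and> u = Leaf"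
  by (cases rule: path.cases) auto

lemma path_node_consistent:
  assumes "path T A u" and "dtree_for F T" and "u = Node x p q"
  shows "(\<exists>S\<in>snd F. A \<subseteq> S) \<and> x \<in> fst F \<and> x \<notin> fst ` A"
  using assms
proof (induction T A u arbitrary: F rule: path.induct)
  case (1 T)
  then show ?case by (auto elim: dtree_for.cases)
next
  case (2 T y p' n' b c A u)
  have children: "\<forall>b c. child T b = Some c \<longrightarrow>
      (fst F = {y} \<longrightarrow> c = Leaf) \<and> (fst F \<noteq> {y} \<longrightarrow> dtree_for (restr F {(y, b)}) c)"
    using "2.prems"(1) unfolding "2.hyps"(1) by (subst (asm) dtree_for.simps) blast
  have "c \<noteq> Leaf"
    using "2.hyps"(3) "2.prems"(2) path_Leaf by blast
  then have "dtree_for (restr F {(y, b)}) c"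
    using children "2.hyps"(2) by blast
  from "2.IH"[OF this "2.prems"(2)] obtain S where
    S: "S \<in> snd (restr F {(y, b)})" "A \<subseteq> S"
    and x: "x \<in> fst (restr F {(y, b)})" "x \<notin> fst ` A"
    by blast
  have "S \<union> {(y, b)} \<in> snd F" and "insert (y, b) A \<subseteq> S \<union> {(y, b)}"
    using S by (auto simp: restr_def)
  moreover have "x \<in> fst F" "x \<noteq> y"
    using x by (auto simp: restr_def)
  ultimately show ?case
    using x by auto
qed

lemma total_on_lit_unique:
  "total_on V S \<Longrightarrow> (v, b) \<in> S \<Longrightarrow> (v, c) \<in> S \<Longrightarrow> b = c"
  unfolding total_on_def by (cases b; cases c) auto

lemma total_on_Diff:
  assumes "total_on V S" and "A \<subseteq> S"
  shows "total_on (V - fst ` A) (S - A)"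
proof -
  have "v \<notin> fst ` A" if "(v, c) \<in> S - A" for v c
  proof
    assume "v \<in> fst ` A"
    then obtain b where "(v, b) \<in> A" by force
    with that assms show False using total_on_lit_unique[OF assms(1), of v b c] by auto
  qed
  then show ?thesis using assms(1) unfolding total_on_def by (fastforce intro: rev_image_eqI)
qed

lemma total_on_subset_lits:
  assumes "total_on V S" and "A \<subseteq> S"
  shows "total_on (fst ` A) A"
  unfolding total_on_def
proof (intro conjI ballI)
  show "A \<subseteq> fst ` A \<times> UNIV" by (auto intro: rev_image_eqI)
  fix v assume "v \<in> fst ` A"
  then obtain b where b: "(v, b) \<in> A" by force
  with assms have "(v, \<not> b) \<notin> A" using total_on_lit_unique[OF assms(1), of v b "\<not> b"] by auto
  with b show "((v, True) \<in> A) \<noteq> ((v, False) \<in> A)" by (cases b) auto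
qed

lemma total_on_Un:
  "total_on V S \<Longrightarrow> total_on W R \<Longrightarrow> V \<inter> W = {} \<Longrightarrow> total_on (V \<union> W) (S \<union> R)"
  unfolding total_on_def by blast

lemma total_on_override:
  assumes "total_on V S" and "total_on D R" and "D \<subseteq> V"
  shows "total_on V ((S - D \<times> UNIV) \<union> R)"
  using assms unfolding total_on_def by blast

lemma card_total_on_agreeing_le:
  assumes "finite D" and "D \<subseteq> W"
    and total: "\<And>S. S \<in> P \<Longrightarrow> total_on W S"
    and agree: "\<And>S S'. S \<in> P \<Longrightarrow> S' \<in> P \<Longrightarrow> S - D \<times> UNIV = S' - D \<times> UNIV"
  shows "card P \<le> 2 ^ card D"
proof -
  have "inj_on (\<lambda>S. {v \<in> D. (v, True) \<in> S}) P"
  proof (rule inj_onI)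
    fix S S' assume S: "S \<in> P" "S' \<in> P"
      and same: "{v \<in> D. (v, True) \<in> S} = {v \<in> D. (v, True) \<in> S'}"
    show "S = S'"
    proof (rule set_eqI)
      fix l :: "'a lit"
      obtain v c where l: "l = (v, c)" by (cases l)
      show "l \<in> S \<longleftrightarrow> l \<in> S'"
      proof (cases "v \<in> D")
        case True
        then have "v \<in> W" and "(v, True) \<in> S \<longleftrightarrow> (v, True) \<in> S'"
          using assms(2) same by blast+
        moreover have "(v, False) \<in> S \<longleftrightarrow> (v, True) \<notin> S" "(v, False) \<in> S' \<longleftrightarrow> (v, True) \<notin> S'"
          using total[OF S(1)] total[OF S(2)] \<open>v \<in> W\<close> unfolding total_on_def by blast+
        ultimately show ?thesis
          unfolding l by (cases c) auto
      next
        case False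
        then show ?thesis using agree[OF S] l by blast
      qed
    qed
  qed
  then have "card P \<le> card (Pow D)"
    by (rule card_inj_on_le) (use assms(1) in auto)
  then show ?thesis
    using assms(1) by (simp add: card_Pow)
qed

lemma nsat_restr_lit:
  assumes total: "\<forall>S\<in>snd G. total_on (fst G) S" and "x \<in> fst G"
  shows "nsat (restr G {(x, b)}) = card {S \<in> snd G. (x, b) \<in> S}"
proof -
  have "bij_betw (insert (x, b)) (snd (restr G {(x, b)})) {S \<in> snd G. (x, b) \<in> S}"
  proof (rule bij_betw_byWitness[where f' = "\<lambda>S. S - {(x, b)}"])
    show "\<forall>S\<in>snd (restr G {(x, b)}). insert (x, b) S - {(x, b)} = S"
      by (auto simp: restr_def total_on_def)
    show "\<forall>S\<in>{S \<in> snd G. (x, b) \<in> S}. insert (x, b) (S - {(x, b)}) = S"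
      by auto
    show "insert (x, b) ` snd (restr G {(x, b)}) \<subseteq> {S \<in> snd G. (x, b) \<in> S}"
      by (auto simp: restr_def)
    have "total_on (fst G - {x}) (S - {(x, b)})" if "S \<in> snd G" "(x, b) \<in> S" for S
      using total_on_Diff[of "fst G" S "{(x, b)}"] that total by simp
    then show "(\<lambda>S. S - {(x, b)}) ` {S \<in> snd G. (x, b) \<in> S} \<subseteq> snd (restr G {(x, b)})"
      by (auto simp: restr_def insert_absorb)
  qed
  then show ?thesis
    unfolding nsat_def by (rule bij_betw_same_card)
qed

lemma card_le_card_mult_fibres:
  assumes "finite M" and "g ` N \<subseteq> M" and "\<And>t. t \<in> M \<Longrightarrow> card {S \<in> N. g S = t} \<le> m"
  shows "card N \<le> card M * m"
proof -
  have "N = (\<Union>t\<in>M. {S \<in> N. g S = t})"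
    using assms(2) by auto
  then have "card N \<le> (\<Sum>t\<in>M. card {S \<in> N. g S = t})"
    using card_UN_le[OF assms(1)] by metis
  also have "\<dots> \<le> (\<Sum>t\<in>M. m)"
    using assms(3) by (intro sum_mono) auto
  finally show ?thesis
    by (simp add: mult.commute)
qed

definition covers :: "'a set set \<Rightarrow> 'a lit set \<Rightarrow> bool" where
  "covers E S \<longleftrightarrow> (\<forall>u v. {u, v} \<in> E \<longrightarrow> (u, True) \<in> S \<or> (v, True) \<in> S)"

lemma snd_phi: "snd (phi V E) = {S. total_on V S \<and> covers E S}"
  by (simp add: phi_def covers_def)

locale phi_restriction =
  fixes V :: "'a set" and E :: "'a set set" and A S0 :: "'a lit set"
  assumes graph: "simple_graph V E" and S0: "S0 \<in> snd (phi V E)" and A_S0: "A \<subseteq> S0"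
begin

abbreviation free :: "'a set" where
  "free \<equiv> V - fst ` A"

abbreviation sols :: "'a lit set set" where
  "sols \<equiv> snd (restr (phi V E) A)"

lemma edge_endpoints: "{u, v} \<in> E \<Longrightarrow> u \<in> V \<and> v \<in> V \<and> u \<noteq> v"
  using graph unfolding simple_graph_def by fastforce

lemma total_on_V_S0: "total_on V S0"
  using S0 by (simp add: snd_phi)

lemma mem_sols_iff: "S \<in> sols \<longleftrightarrow> total_on free S \<and> covers E (S \<union> A)"
proof -
  have "total_on V (S \<union> A)" if "total_on free S"
  proof -
    have "fst ` A \<subseteq> V"
      using A_S0 total_on_V_S0 unfolding total_on_def by force
    then have "free \<union> fst ` A = V" and "free \<inter> fst ` A = {}"
      by auto
    then show ?thesis
      using total_on_Un[OF that total_on_subset_lits[OF total_on_V_S0 A_S0]] by simp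
  qed
  then show ?thesis
    by (auto simp: restr_def phi_def covers_def)
qed

lemma total_on_sols_Un: "S \<in> sols \<Longrightarrow> total_on V (S \<union> A)"
  by (simp add: restr_def phi_def)

lemma S0_Diff_mem_sols: "S0 - A \<in> sols"
proof -
  have "S0 - A \<union> A = S0"
    using A_S0 by auto
  then show ?thesis
    using S0 total_on_Diff[OF total_on_V_S0 A_S0] by (simp add: mem_sols_iff snd_phi)
qed

lemma finite_sols: "finite sols"
proof (rule finite_subset)
  show "sols \<subseteq> Pow (free \<times> UNIV)"
    using mem_sols_iff unfolding total_on_def by blast
  show "finite (Pow (free \<times> (UNIV :: bool set)))"
    using graph by (simp add: simple_graph_def)
qed

lemma card_sols_split:
  assumes "x \<in> free"
  shows "card sols = card {S \<in> sols. (x, True) \<in> S} + card {S \<in> sols. (x, False) \<in> S}"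
proof -
  have "((x, True) \<in> S) \<noteq> ((x, False) \<in> S)" if "S \<in> sols" for S
    using that assms by (simp add: mem_sols_iff total_on_def)
  then have "sols = {S \<in> sols. (x, True) \<in> S} \<union> {S \<in> sols. (x, False) \<in> S}"
    and "{S \<in> sols. (x, True) \<in> S} \<inter> {S \<in> sols. (x, False) \<in> S} = {}"
    by blast+
  then show ?thesis
    using finite_sols card_Un_disjoint by (metis (no_types, lifting) finite_Un)
qed

lemma card_false_le_card_true:
  assumes x: "x \<in> free"
  shows "card {S \<in> sols. (x, False) \<in> S} \<le> card {S \<in> sols. (x, True) \<in> S}"
proof -
  define set_true where "set_true S = (S - {x} \<times> UNIV) \<union> {(x, True)}" for S :: "'a lit set"
  have "set_true S \<in> {S \<in> sols. (x, True) \<in> S}" if "S \<in> sols" for S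
  proof -
    have "total_on free (set_true S)"
      unfolding set_true_def
      by (rule total_on_override) (use that x in \<open>auto simp: mem_sols_iff total_on_def\<close>)
    moreover have "covers E (set_true S \<union> A)"
      using that unfolding mem_sols_iff covers_def set_true_def by blast
    ultimately show ?thesis
      by (simp add: mem_sols_iff set_true_def)
  qed
  moreover have "inj_on set_true {S \<in> sols. (x, False) \<in> S}"
  proof (rule inj_onI)
    fix S S' assume S: "S \<in> {S \<in> sols. (x, False) \<in> S}" "S' \<in> {S \<in> sols. (x, False) \<in> S}"
      and eq: "set_true S = set_true S'"
    have "(x, True) \<notin> S" "(x, True) \<notin> S'"
      using S x by (auto simp: mem_sols_iff total_on_def)
    then have "S = (set_true S - {(x, True)}) \<union> {(x, False)}"
      and "S' = (set_true S' - {(x, True)}) \<union> {(x, False)}"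
      using S unfolding set_true_def by blast+
    with eq show "S = S'"
      by simp
  qed
  ultimately show ?thesis
    using finite_sols by (intro card_inj_on_le) auto
qed

lemma sols_neighbour_true:
  assumes S: "S \<in> sols" and "\<not> forced1 E A x" and "{x, v} \<in> E" and "v \<notin> Nu E A x"
  shows "(v, True) \<in> S \<union> A"
proof (cases "v \<in> fst ` A")
  case True
  then obtain b where "(v, b) \<in> A"
    by force
  moreover have "(v, False) \<notin> A"
    using assms(2,3) unfolding forced1_def by blast
  ultimately show ?thesis
    by (cases b) auto
next
  case False
  with assms(3,4) have "forced1 E A v"
    by (simp add: Nu_def)
  then obtain z where z: "{v, z} \<in> E" "(z, False) \<in> A"
    unfolding forced1_def by blast
  have "(z, True) \<notin> S \<union> A"
    using total_on_lit_unique[OF total_on_sols_Un[OF S], of z True False] z(2) by auto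
  moreover have "(v, True) \<in> S \<union> A \<or> (z, True) \<in> S \<union> A"
    using S z(1) unfolding mem_sols_iff covers_def by blast
  ultimately show ?thesis
    by blast
qed

lemma card_sols_le_false:
  assumes x: "x \<in> free" and not_forced: "\<not> forced1 E A x"
  shows "card sols \<le> card {S \<in> sols. (x, False) \<in> S} * 2 ^ (card (Nu E A x) + 1)"
proof -
  define K where "K = Nu E A x"
  define D where "D = insert x K"
  define R where "R = insert (x, False) (K \<times> {True})"
  define drop where "drop S = (S - D \<times> UNIV) \<union> R" for S :: "'a lit set"
  have K_free: "K \<subseteq> free" and x_K: "x \<notin> K"
    using edge_endpoints edge_endpoints[of x x] unfolding K_def Nu_def by auto
  have D_free: "D \<subseteq> free"
    using K_free x by (simp add: D_def)
  have "finite K"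
    using K_free graph finite_subset unfolding simple_graph_def by blast
  then have card_D: "card D = card K + 1"
    using x_K by (simp add: D_def)
  have R_D: "R \<subseteq> D \<times> UNIV" and total_R: "total_on D R"
    using x_K unfolding R_def D_def total_on_def by auto
  have "drop S \<in> {S \<in> sols. (x, False) \<in> S}" if S: "S \<in> sols" for S
  proof -
    have "total_on free (drop S)"
      unfolding drop_def using S D_free total_R by (intro total_on_override) (auto simp: mem_sols_iff)
    moreover have "covers E (drop S \<union> A)"
      unfolding covers_def
    proof (intro allI impI)
      fix a b assume ab: "{a, b} \<in> E"
      have kept: "(v, True) \<in> drop S \<union> A" if "(v, True) \<in> S \<union> A" "v \<noteq> x" for v
        using that by (auto simp: drop_def D_def R_def)
      have neighbour: "(v, True) \<in> drop S \<union> A" if "{x, v} \<in> E" for v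
      proof (cases "v \<in> K")
        case True
        then show ?thesis by (simp add: drop_def R_def)
      next
        case False
        then have "(v, True) \<in> S \<union> A"
          using sols_neighbour_true[OF S not_forced that] by (simp add: K_def)
        moreover have "v \<noteq> x"
          using edge_endpoints[OF that] by auto
        ultimately show ?thesis
          by (rule kept)
      qed
      show "(a, True) \<in> drop S \<union> A \<or> (b, True) \<in> drop S \<union> A"
      proof (cases "a = x \<or> b = x")
        case True
        then show ?thesis
          using neighbour ab by (metis insert_commute)
      next
        case False
        then show ?thesis
          using kept S ab unfolding mem_sols_iff covers_def by blast
      qed
    qed
    ultimately show ?thesis
      by (simp add: mem_sols_iff drop_def R_def)
  qed
  then have "drop ` sols \<subseteq> {S \<in> sols. (x, False) \<in> S}"
    by blast
  moreover have "card {S \<in> sols. drop S = t} \<le> 2 ^ card D" for t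
  proof (rule card_total_on_agreeing_le[where W = free])
    show "S - D \<times> UNIV = S' - D \<times> UNIV"
      if "S \<in> {S \<in> sols. drop S = t}" "S' \<in> {S \<in> sols. drop S = t}" for S S'
    proof -
      have "S - D \<times> UNIV = drop S - D \<times> UNIV" "S' - D \<times> UNIV = drop S' - D \<times> UNIV"
        using R_D unfolding drop_def by blast+
      with that show ?thesis
        by simp
    qed
  qed (use \<open>finite K\<close> D_free in \<open>auto simp: D_def mem_sols_iff\<close>)
  ultimately show ?thesis
    using card_le_card_mult_fibres[of "{S \<in> sols. (x, False) \<in> S}" drop sols] finite_sols card_D
    by (simp add: K_def)
qed

end

theorem lemma10:
  fixes V :: "'a set" and E :: "'a set set" and T u :: "'a dtree" and A :: "'a lit set"
    and x :: 'a and p q :: "'a dtree option"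
  assumes "simple_graph V E" and "no_isolated V E"
    and "dtree_for (phi V E) T"
    and "path T A u" and "u = Node x p q"
    and "\<not> forced1 E A x"
  shows "real (nsat (restr (restr (phi V E) A) {(x, False)})) / real (nsat (restr (phi V E) A))
           \<ge> (1/2) ^ (card (Nu E A x) + 1) \<and>
         real (nsat (restr (restr (phi V E) A) {(x, True)})) / real (nsat (restr (phi V E) A))
           \<ge> 1/2"
proof -
  obtain S0 where "S0 \<in> snd (phi V E)" "A \<subseteq> S0" and x: "x \<in> V - fst ` A"
    using path_node_consistent[OF assms(4,3,5)] by (auto simp: phi_def)
  then interpret phi_restriction V E A S0
    using assms(1) by unfold_locales
  define n t f where "n = card sols"
    and "t = card {S \<in> sols. (x, True) \<in> S}" and "f = card {S \<in> sols. (x, False) \<in> S}"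
  have nsat_lit: "nsat (restr (restr (phi V E) A) {(x, b)}) = card {S \<in> sols. (x, b) \<in> S}" for b
    using x by (intro nsat_restr_lit) (auto simp: restr_def phi_def)
  have "0 < n"
    using finite_sols S0_Diff_mem_sols card_gt_0_iff unfolding n_def by blast
  have "n = t + f" and "f \<le> t" and "n \<le> f * 2 ^ (card (Nu E A x) + 1)"
    using card_sols_split[OF x] card_false_le_card_true[OF x] card_sols_le_false[OF x assms(6)]
    unfolding n_def t_def f_def by simp_all
  then have "real n \<le> real f * 2 ^ (card (Nu E A x) + 1)" and "real n \<le> 2 * real t"
    by (metis of_nat_le_iff of_nat_mult of_nat_numeral of_nat_power, simp)
  with \<open>0 < n\<close> have "(1/2) ^ (card (Nu E A x) + 1) \<le> real f / real n"
    and "1/2 \<le> real t / real n"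
    by (simp_all add: power_one_over field_simps)
  then show ?thesis
    using nsat_lit unfolding n_def t_def f_def nsat_def by simp
qed

end
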